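(* Let $\Phi=(\varphi_n)_{n\in\mathbb{N}}$ be a depth-bounded fuzzy simulation between fuzzy automata $\mathcal{A}$ and $\mathcal{A}'$. Then for every $n\in\mathbb{N}$ and every $(x,x')\in A\times A'$: $\varphi_n(x,x')\le S(\mathbf{L}^{\le n}(\mathcal{A}_x),\mathbf{L}^{\le n}(\mathcal{A}'_{x'}))$ and $\|\varphi_n\|_{\mathcal{A},\mathcal{A}'}\le S(\mathbf{L}^{\le n}(\mathcal{A}),\mathbf{L}^{\le n}(\mathcal{A}'))$.
   Context: $\mathcal{L}=\langle L,\le,\otimes,\Rightarrow,0,1\rangle$ is a complete residuated lattice: $\langle L,\le,0,1\rangle$ is a complete lattice with least element $0$ and greatest element $1$, $\langle L,\otimes,1\rangle$ is a commutative monoid, and $x\otimes y\le z$ iff $x\le (y\Rightarrow z)$. Fuzzy sets/relations are maps into $L$ ordered pointwise; $\varphi^{-1}(b,a)=\varphi(a,b)$; $(\varphi\circ\psi)(a,c)=\bigvee_b\varphi(a,b)\otimes\psi(b,c)$, $(f\circ\varphi)(b)=\bigvee_a f(a)\otimes\varphi(a,b)$, $(\varphi\circ g)(a)=\bigvee_b\varphi(a,b)\otimes g(b)$; for fuzzy sets $g,f$ on the same set, $S(g,f)=\bigwedge_a(g(a)\Rightarrow f(a))$. A fuzzy automaton over $\Sigma$ is $\mathcal{A}=\langle A,\delta^{\mathcal{A}},\sigma^{\mathcal{A}},\tau^{\mathcal{A}}\rangle$ with $A$ nonempty, $\delta^{\mathcal{A}}:A\times\Sigma\times A\to L$, $\sigma^{\mathcal{A}},\tau^{\mathcal{A}}:A\to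 L$; $\delta^{\mathcal{A}}_s(x,y)=\delta^{\mathcal{A}}(x,s,y)$; similarly $\mathcal{A}'$ with states $A'$. $\mathcal{A}_x$ is the automaton differing from $\mathcal{A}$ only in that its initial fuzzy set is $\{x:1\}$ (value $1$ at $x$, $0$ elsewhere). The recognized fuzzy language $\mathbf{L}(\mathcal{A}):\Sigma^*\to L$ is $\mathbf{L}(\mathcal{A})(s_1\cdots s_k)=\sigma^{\mathcal{A}}\circ\delta^{\mathcal{A}}_{s_1}\circ\cdots\circ\delta^{\mathcal{A}}_{s_k}\circ\tau^{\mathcal{A}}$; $\mathbf{L}^{\le n}(\mathcal{A})(w)=\mathbf{L}(\mathcal{A})(w)$ if $|w|\le n$ and $0$ otherwise. $\|\varphi\|_{\mathcal{A},\mathcal{A}'}=S(\sigma^{\mathcal{A}},\sigma^{\mathcal{A}'}\circ\varphi^{-1})$. A depth-bounded fuzzy simulation between $\mathcal{A}$ and $\mathcal{A}'$ is a sequence $(\varphi_n)_{n\in\mathbb{N}}$ of fuzzy relations $A\times A'\to L$ with $\varphi_n\le\varphi_{n-1}$ ($n\ge1$), $\varphi_0^{-1}\circ\tau^{\mathcal{A}}\le\tau^{\mathcal{A}'}$, and $\varphi_n^{-1}\circ\delta^{\mathcal{A}}_s\le\delta^{\mathcal{A}'}_s\circ\varphi_{n-1}^{-1}$ for all $s\in\Sigma$, $n\ge1$. *)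

theory Defs
  imports Main
begin

text \<open>Complete residuated lattice on a complete lattice type 'l:
  mult is the monoid operation (unit top = 1), res is the residuum; 0 = bot.\<close>

definition residuated :: "('l::complete_lattice \<Rightarrow> 'l \<Rightarrow> 'l) \<Rightarrow> ('l \<Rightarrow> 'l \<Rightarrow> 'l) \<Rightarrow> bool" where
  "residuated mult res \<longleftrightarrow>
     (\<forall>x y z. mult (mult x y) z = mult x (mult y z)) \<and>
     (\<forall>x y. mult x y = mult y x) \<and>
     (\<forall>x. mult x top = x) \<and>
     (\<forall>x y z. mult x y \<le> z \<longleftrightarrow> x \<le> res y z)"

record ('a, 's, 'l) fuzzy_automaton =
  delta :: "'a \<Rightarrow> 's \<Rightarrow> 'a \<Rightarrow> 'l"
  sigma :: "'a \<Rightarrow> 'l"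
  tau :: "'a \<Rightarrow> 'l"

definition conv_rel :: "('a \<Rightarrow> 'b \<Rightarrow> 'l) \<Rightarrow> 'b \<Rightarrow> 'a \<Rightarrow> 'l" where
  "conv_rel \<phi> b a = \<phi> a b"

definition comp_rr :: "('l::complete_lattice \<Rightarrow> 'l \<Rightarrow> 'l) \<Rightarrow> ('a \<Rightarrow> 'b \<Rightarrow> 'l) \<Rightarrow> ('b \<Rightarrow> 'c \<Rightarrow> 'l) \<Rightarrow> 'a \<Rightarrow> 'c \<Rightarrow> 'l" where
  "comp_rr mult \<phi> \<psi> a c = (SUP b. mult (\<phi> a b) (\<psi> b c))"

definition comp_sr :: "('l::complete_lattice \<Rightarrow> 'l \<Rightarrow> 'l) \<Rightarrow> ('a \<Rightarrow> 'l) \<Rightarrow> ('a \<Rightarrow> 'b \<Rightarrow> 'l) \<Rightarrow> 'b \<Rightarrow> 'l" where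
  "comp_sr mult f \<phi> b = (SUP a. mult (f a) (\<phi> a b))"

definition comp_rs :: "('l::complete_lattice \<Rightarrow> 'l \<Rightarrow> 'l) \<Rightarrow> ('a \<Rightarrow> 'b \<Rightarrow> 'l) \<Rightarrow> ('b \<Rightarrow> 'l) \<Rightarrow> 'a \<Rightarrow> 'l" where
  "comp_rs mult \<phi> g a = (SUP b. mult (\<phi> a b) (g b))"

definition comp_ss :: "('l::complete_lattice \<Rightarrow> 'l \<Rightarrow> 'l) \<Rightarrow> ('a \<Rightarrow> 'l) \<Rightarrow> ('a \<Rightarrow> 'l) \<Rightarrow> 'l" where
  "comp_ss mult f g = (SUP a. mult (f a) (g a))"

definition Sinc :: "('l::complete_lattice \<Rightarrow> 'l \<Rightarrow> 'l) \<Rightarrow> ('a \<Rightarrow> 'l) \<Rightarrow> ('a \<Rightarrow> 'l) \<Rightarrow> 'l" where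
  "Sinc res g f = (INF a. res (g a) (f a))"

definition delta_s :: "('a, 's, 'l) fuzzy_automaton \<Rightarrow> 's \<Rightarrow> 'a \<Rightarrow> 'a \<Rightarrow> 'l" where
  "delta_s A s x y = delta A x s y"

fun future :: "('l::complete_lattice \<Rightarrow> 'l \<Rightarrow> 'l) \<Rightarrow> ('a, 's, 'l) fuzzy_automaton \<Rightarrow> 's list \<Rightarrow> 'a \<Rightarrow> 'l" where
  "future mult A [] = tau A"
| "future mult A (s # w) = comp_rs mult (delta_s A s) (future mult A w)"

definition lang :: "('l::complete_lattice \<Rightarrow> 'l \<Rightarrow> 'l) \<Rightarrow> ('a, 's, 'l) fuzzy_automaton \<Rightarrow> 's list \<Rightarrow> 'l" where
  "lang mult A w = comp_ss mult (sigma A) (future mult A w)"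

definition lang_le :: "('l::complete_lattice \<Rightarrow> 'l \<Rightarrow> 'l) \<Rightarrow> ('a, 's, 'l) fuzzy_automaton \<Rightarrow> nat \<Rightarrow> 's list \<Rightarrow> 'l" where
  "lang_le mult A n w = (if length w \<le> n then lang mult A w else bot)"

definition auto_at :: "('a, 's, 'l::complete_lattice) fuzzy_automaton \<Rightarrow> 'a \<Rightarrow> ('a, 's, 'l) fuzzy_automaton" where
  "auto_at A x = A\<lparr>sigma := (\<lambda>y. if y = x then top else bot)\<rparr>"

definition rel_norm :: "('l::complete_lattice \<Rightarrow> 'l \<Rightarrow> 'l) \<Rightarrow> ('l \<Rightarrow> 'l \<Rightarrow> 'l) \<Rightarrow> ('a, 's, 'l) fuzzy_automaton \<Rightarrow> ('b, 's, 'l) fuzzy_automaton \<Rightarrow> ('a \<Rightarrow> 'b \<Rightarrow> 'l) \<Rightarrow> 'l" where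
  "rel_norm mult res A A' \<phi> = Sinc res (sigma A) (comp_sr mult (sigma A') (conv_rel \<phi>))"

definition depth_bounded_simulation :: "('l::complete_lattice \<Rightarrow> 'l \<Rightarrow> 'l) \<Rightarrow> ('a, 's, 'l) fuzzy_automaton \<Rightarrow> ('b, 's, 'l) fuzzy_automaton \<Rightarrow> (nat \<Rightarrow> 'a \<Rightarrow> 'b \<Rightarrow> 'l) \<Rightarrow> bool" where
  "depth_bounded_simulation mult A A' \<Phi> \<longleftrightarrow>
     (\<forall>n\<ge>1. \<Phi> n \<le> \<Phi> (n - 1)) \<and>
     comp_rs mult (conv_rel (\<Phi> 0)) (tau A) \<le> tau A' \<and>
     (\<forall>s. \<forall>n\<ge>1. comp_rr mult (conv_rel (\<Phi> n)) (delta_s A s)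
                 \<le> comp_rr mult (delta_s A' s) (conv_rel (\<Phi> (n - 1))))"

end

theory Submission
  imports Defs
begin

text \<open>By induction on words, a degree \<open>\<Phi> n x x'\<close> of simulation transports every word of length
  at most \<open>n\<close> accepted from \<open>x\<close> to the same word accepted from \<open>x'\<close>:
  \<open>\<Phi> n x x' \<otimes> (\<delta>\<^sub>w \<circ> \<tau>)(x) \<le> (\<delta>'\<^sub>w \<circ> \<tau>')(x')\<close>. Each letter consumes one level of the
  sequence, the empty word uses the condition on \<open>\<Phi> 0\<close> together with \<open>\<Phi> n \<le> \<Phi> 0\<close>.
  The same step, with \<open>\<parallel>\<Phi> n\<parallel>\<close> in place of a letter, passes from \<open>\<sigma>\<close> to \<open>\<sigma>'\<close>;
  adjointness turns these inequalities into the bounds by degrees of inclusion.\<close>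

lemma residuated_mult_commute: "residuated mult res \<Longrightarrow> mult x y = mult y x"
  unfolding residuated_def by blast

lemma residuated_mult_assoc: "residuated mult res \<Longrightarrow> mult (mult x y) z = mult x (mult y z)"
  unfolding residuated_def by blast

lemma residuated_mult_top: "residuated mult res \<Longrightarrow> mult x top = x"
  unfolding residuated_def by blast

lemma residuated_le_res_iff: "residuated mult res \<Longrightarrow> x \<le> res y z \<longleftrightarrow> mult x y \<le> z"
  unfolding residuated_def by blast

lemma residuated_mult_SUP_le:
  assumes R: "residuated mult res" and "\<And>i. mult x (f i) \<le> z"
  shows "mult x (SUP i. f i) \<le> z"
proof -
  have "f i \<le> res x z" for i
    using assms residuated_le_res_iff[OF R] residuated_mult_commute[OF R] by metis
  then have "(SUP i. f i) \<le> res x z" by (rule SUP_least)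
  then show ?thesis using residuated_le_res_iff[OF R] residuated_mult_commute[OF R] by metis
qed

lemma residuated_mult_mono:
  assumes R: "residuated mult res" and "a \<le> b"
  shows "mult c a \<le> mult c b"
proof -
  have "b \<le> res c (mult c b)"
    using residuated_le_res_iff[OF R] residuated_mult_commute[OF R] by (metis order_refl)
  then show ?thesis
    using assms(2) residuated_le_res_iff[OF R] residuated_mult_commute[OF R] by (metis order_trans)
qed

lemma residuated_mult_bot: "residuated mult res \<Longrightarrow> mult x bot = bot"
  using residuated_le_res_iff[of mult res bot x bot] residuated_mult_commute[of mult res x bot]
  by (simp add: bot_unique)

lemma residuated_mult_comp_ss_le:
  assumes R: "residuated mult res"
    and g: "\<And>y. mult c (g y) \<le> comp_sr mult g' (conv_rel \<phi>) y"
    and f: "\<And>y y'. mult (\<phi> y y') (f y) \<le> f' y'"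
  shows "mult c (comp_ss mult g f) \<le> comp_ss mult g' f'"
  unfolding comp_ss_def
proof (rule residuated_mult_SUP_le[OF R])
  fix y
  have "mult c (mult (g y) (f y)) = mult (f y) (mult c (g y))"
    using residuated_mult_assoc[OF R] residuated_mult_commute[OF R] by metis
  also have "\<dots> \<le> mult (f y) (SUP y'. mult (g' y') (\<phi> y y'))"
    using residuated_mult_mono[OF R g] by (simp add: comp_sr_def conv_rel_def)
  also have "\<dots> \<le> (SUP y'. mult (g' y') (f' y'))"
  proof (rule residuated_mult_SUP_le[OF R])
    fix y'
    have "mult (f y) (mult (g' y') (\<phi> y y')) = mult (g' y') (mult (\<phi> y y') (f y))"
      using residuated_mult_assoc[OF R] residuated_mult_commute[OF R] by metis
    also have "\<dots> \<le> mult (g' y') (f' y')"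
      by (rule residuated_mult_mono[OF R f])
    finally show "mult (f y) (mult (g' y') (\<phi> y y')) \<le> (SUP y'. mult (g' y') (f' y'))"
      by (simp add: SUP_upper2)
  qed
  finally show "mult c (mult (g y) (f y)) \<le> (SUP y'. mult (g' y') (f' y'))" .
qed

lemma depth_bounded_simulation_antimono:
  assumes S: "depth_bounded_simulation mult A A' \<Phi>" and "m \<le> n"
  shows "\<Phi> n \<le> \<Phi> m"
  using \<open>m \<le> n\<close>
proof (induction n rule: dec_induct)
  case (step k)
  have "\<Phi> (Suc k) \<le> \<Phi> k"
    using S unfolding depth_bounded_simulation_def by (metis diff_Suc_1 le_add1 plus_1_eq_Suc)
  with step.IH show ?case by simp
qed simp

lemma depth_bounded_simulation_future:
  assumes R: "residuated mult res" and S: "depth_bounded_simulation mult A A' \<Phi>"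
    and "length w \<le> n"
  shows "mult (\<Phi> n x x') (future mult A w x) \<le> future mult A' w x'"
  using \<open>length w \<le> n\<close>
proof (induction w arbitrary: n x x')
  case Nil
  have "mult (\<Phi> n x x') (tau A x) \<le> mult (\<Phi> 0 x x') (tau A x)"
    using depth_bounded_simulation_antimono[OF S, of 0 n] residuated_mult_mono[OF R]
      residuated_mult_commute[OF R] by (metis le_funE zero_le)
  also have "\<dots> \<le> comp_rs mult (conv_rel (\<Phi> 0)) (tau A) x'"
    unfolding comp_rs_def conv_rel_def by (rule SUP_upper) simp
  also have "\<dots> \<le> tau A' x'"
    using S unfolding depth_bounded_simulation_def by (simp add: le_fun_def)
  finally show ?case by simp
next
  case (Cons s v)
  then obtain m where n: "n = Suc m" and v: "length v \<le> m" by (cases n) auto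
  have step: "comp_rr mult (conv_rel (\<Phi> n)) (delta_s A s) \<le> comp_rr mult (delta_s A' s) (conv_rel (\<Phi> m))"
    using S n unfolding depth_bounded_simulation_def by (metis diff_Suc_1 le_add1 plus_1_eq_Suc)
  have "mult (\<Phi> n x x') (delta_s A s x y) \<le> comp_sr mult (delta_s A' s x') (conv_rel (\<Phi> m)) y" for y
  proof -
    have "mult (\<Phi> n x x') (delta_s A s x y) \<le> comp_rr mult (conv_rel (\<Phi> n)) (delta_s A s) x' y"
      unfolding comp_rr_def conv_rel_def by (rule SUP_upper) simp
    also have "\<dots> \<le> comp_rr mult (delta_s A' s) (conv_rel (\<Phi> m)) x' y"
      using step by (simp add: le_fun_def)
    finally show ?thesis by (simp add: comp_rr_def comp_sr_def)
  qed
  from residuated_mult_comp_ss_le[OF R this Cons.IH[OF v]]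
  show ?case by (simp add: comp_rs_def comp_ss_def)
qed

lemma future_auto_at: "future mult (auto_at A x) w = future mult A w"
  by (induction w) (simp_all add: auto_at_def delta_s_def comp_rs_def)

lemma lang_auto_at:
  assumes R: "residuated mult res"
  shows "lang mult (auto_at A x) w = future mult A w x"
proof -
  have "lang mult (auto_at A x) w = (SUP y. if y = x then future mult A w x else bot)"
    unfolding lang_def comp_ss_def future_auto_at
    by (rule SUP_cong) (auto simp: auto_at_def residuated_mult_top[OF R] residuated_mult_bot[OF R]
        residuated_mult_commute[OF R, of top] residuated_mult_commute[OF R, of bot])
  also have "\<dots> = future mult A w x"
    by (rule antisym) (auto intro!: SUP_least SUP_upper2[where i=x])
  finally show ?thesis .
qed

lemma le_Sinc_lang_le:
  assumes R: "residuated mult res"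
    and "\<And>w. length w \<le> n \<Longrightarrow> mult c (lang mult A w) \<le> lang mult A' w"
  shows "c \<le> Sinc res (lang_le mult A n) (lang_le mult A' n)"
  unfolding Sinc_def lang_le_def
  using assms by (auto intro!: INF_greatest simp: residuated_le_res_iff residuated_mult_bot)

theorem mainTheorem6:
  fixes mult res :: "'l::complete_lattice \<Rightarrow> 'l \<Rightarrow> 'l"
    and A :: "('a, 's, 'l) fuzzy_automaton" and A' :: "('b, 's, 'l) fuzzy_automaton"
    and \<Phi> :: "nat \<Rightarrow> 'a \<Rightarrow> 'b \<Rightarrow> 'l"
  assumes "residuated mult res"
    and "depth_bounded_simulation mult A A' \<Phi>"
  shows "\<forall>n x x'. \<Phi> n x x' \<le> Sinc res (lang_le mult (auto_at A x) n) (lang_le mult (auto_at A' x') n)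
              \<and> rel_norm mult res A A' (\<Phi> n) \<le> Sinc res (lang_le mult A n) (lang_le mult A' n)"
proof (intro allI conjI)
  note R = assms(1) and S = assms(2)
  fix n x x'
  show "\<Phi> n x x' \<le> Sinc res (lang_le mult (auto_at A x) n) (lang_le mult (auto_at A' x') n)"
    using depth_bounded_simulation_future[OF R S]
    by (intro le_Sinc_lang_le[OF R]) (simp add: lang_auto_at[OF R])
  have "mult (rel_norm mult res A A' (\<Phi> n)) (sigma A y)
      \<le> comp_sr mult (sigma A') (conv_rel (\<Phi> n)) y" for y
    unfolding rel_norm_def Sinc_def residuated_le_res_iff[OF R, symmetric] by (rule INF_lower) simp
  from residuated_mult_comp_ss_le[OF R this depth_bounded_simulation_future[OF R S]]
  show "rel_norm mult res A A' (\<Phi> n) \<le> Sinc res (lang_le mult A n) (lang_le mult A' n)"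
    by (intro le_Sinc_lang_le[OF R]) (simp add: lang_def)
qed

end
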